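(* Let $A=\begin{pmatrix} a&b\\ c&d\end{pmatrix}\in F$. Then $A$ commutes with both $C_1$ and $C_2$ if and only if $b=f_4h_2$, $c=-f_4h_3$, $d=a+f_1h_1+f_4h_4$ for some $f_1,f_4\in K[X]$.
   Context: $K$ is an infinite field of characteristic different from 2. Let $X=\{x_1,x_2,x_1',x_2'\}$ and $Y=\{y_1,y_2,y_1',y_2'\}$, and let $K[X;Y]\cong K[X]\otimes_K E(Y)$ be the free supercommutative algebra: the $x$'s are even commuting variables, the $y$'s are odd pairwise anticommuting variables, and $E(Y)$ is the Grassmann algebra on the vector space with basis $Y$. Put $C_1=\begin{pmatrix} x_1&y_1\\ y_1'&x_1'\end{pmatrix}$, $C_2=\begin{pmatrix} x_2&y_2\\ y_2'&x_2'\end{pmatrix}$, and let $F=K[C_1,C_2]$ be the unital $K$-subalgebra of $M_2(K[X;Y])$ generated by $C_1,C_2$. Define $h_1=y_1y_2y_1'y_2'$, $h_2=y_1y_2\big(y_1'(x_2'-x_2)-y_2'(x_1'-x_1)\big)$, $h_3=y_1'y_2'\big(y_1(x_2'-x_2)-y_2(x_1'-x_1)\big)$, $h_4=\big(y_1'(x_2'-x_2)-y_2'(x_1'-x_1)\big)\big(y_1(x_2'-x_2)-y_2(x_1'-x_1)\big)$. *)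

theory Defs
  imports Main "HOL-Library.Poly_Mapping"
begin

(* K[X] with X = {x1, x2, x1', x2'} is modelled as the monoid algebra of
  monomials (nat \<Rightarrow>\<^sub>0 nat) with coefficients in K. Index convention for the
  even variables: x1 = 0, x2 = 1, x1' = 2, x2' = 3. *)

type_synonym 'k mpoly = "(nat \<Rightarrow>\<^sub>0 nat) \<Rightarrow>\<^sub>0 'k"

definition Xvar :: "nat \<Rightarrow> 'k::comm_ring_1 mpoly" where
  "Xvar i = Poly_Mapping.single (Poly_Mapping.single i 1) 1"

definition Kconst :: "'k::comm_ring_1 \<Rightarrow> 'k mpoly" where
  "Kconst c = Poly_Mapping.single 0 c"

(* The odd variables are indexed y1 = 0, y2 = 1, y1' = 2, y2' = 3.
  An element is written uniquely as \<Sum>\<^sub>S p_S y_S, where S ranges over subsets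
  of {0..<4}, p_S \<in> K[X], and y_S is the product of the y_i, i \<in> S, in increasing
  order of index. We represent it by the coefficient function S \<mapsto> p_S
  (which is 0 for S not contained in {0..<4}). *)

type_synonym 'k sc = "nat set \<Rightarrow> 'k mpoly"

(* Number of inversions needed to sort y_T y_U into y_(T \<union> U). *)
definition inv_count :: "nat set \<Rightarrow> nat set \<Rightarrow> nat" where
  "inv_count T U = card {(i, j). i \<in> T \<and> j \<in> U \<and> j < i}"

definition sc_add :: "'k::comm_ring_1 sc \<Rightarrow> 'k sc \<Rightarrow> 'k sc" (infixl "+\<^sub>s" 65) where
  "u +\<^sub>s v = (\<lambda>S. u S + v S)"

definition sc_neg :: "'k::comm_ring_1 sc \<Rightarrow> 'k sc" ("-\<^sub>s _" [81] 80) where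
  "-\<^sub>s u = (\<lambda>S. - u S)"

definition sc_sub :: "'k::comm_ring_1 sc \<Rightarrow> 'k sc \<Rightarrow> 'k sc" (infixl "-\<^sub>s" 65) where
  "u -\<^sub>s v = (\<lambda>S. u S - v S)"

(* Product: (p y_T)(q y_U) = (-1)^inv(T,U) p q y_(T\<union>U) if T, U disjoint, and 0 otherwise. *)
definition sc_mult :: "'k::comm_ring_1 sc \<Rightarrow> 'k sc \<Rightarrow> 'k sc" (infixl "*\<^sub>s" 70) where
  "u *\<^sub>s v = (\<lambda>S. if S \<subseteq> {0..<4}
      then (\<Sum>T\<in>Pow S. (-1) ^ inv_count T (S - T) * u T * v (S - T))
      else 0)"

definition sc_zero :: "'k::comm_ring_1 sc" where
  "sc_zero = (\<lambda>S. 0)"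

definition sc_even :: "'k::comm_ring_1 mpoly \<Rightarrow> 'k sc" where
  "sc_even p = (\<lambda>S. if S = {} then p else 0)"

definition sc_one :: "'k::comm_ring_1 sc" where
  "sc_one = sc_even 1"

definition sc_x :: "nat \<Rightarrow> 'k::comm_ring_1 sc" where
  "sc_x i = sc_even (Xvar i)"

definition sc_y :: "nat \<Rightarrow> 'k::comm_ring_1 sc" where
  "sc_y i = (\<lambda>S. if S = {i} then 1 else 0)"

abbreviation "x1 \<equiv> sc_x 0"
abbreviation "x2 \<equiv> sc_x 1"
abbreviation "x1' \<equiv> sc_x 2"
abbreviation "x2' \<equiv> sc_x 3"
abbreviation "y1 \<equiv> sc_y 0"
abbreviation "y2 \<equiv> sc_y 1"
abbreviation "y1' \<equiv> sc_y 2"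
abbreviation "y2' \<equiv> sc_y 3"

(* A matrix ((a, b), (c, d)) is represented as the tuple (a, b, c, d). *)
type_synonym 'k scmat = "'k sc \<times> 'k sc \<times> 'k sc \<times> 'k sc"

fun mat_add :: "'k::comm_ring_1 scmat \<Rightarrow> 'k scmat \<Rightarrow> 'k scmat" where
  "mat_add (a, b, c, d) (a', b', c', d') = (a +\<^sub>s a', b +\<^sub>s b', c +\<^sub>s c', d +\<^sub>s d')"

fun mat_mult :: "'k::comm_ring_1 scmat \<Rightarrow> 'k scmat \<Rightarrow> 'k scmat" where
  "mat_mult (a, b, c, d) (a', b', c', d') =
     (a *\<^sub>s a' +\<^sub>s b *\<^sub>s c', a *\<^sub>s b' +\<^sub>s b *\<^sub>s d',
      c *\<^sub>s a' +\<^sub>s d *\<^sub>s c', c *\<^sub>s b' +\<^sub>s d *\<^sub>s d')"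

definition mat_scalar :: "'k::comm_ring_1 \<Rightarrow> 'k scmat" where
  "mat_scalar k = (sc_even (Kconst k), sc_zero, sc_zero, sc_even (Kconst k))"

definition C1 :: "'k::comm_ring_1 scmat" where
  "C1 = (x1, y1, y1', x1')"

definition C2 :: "'k::comm_ring_1 scmat" where
  "C2 = (x2, y2, y2', x2')"

(* F = K[C1, C2]: the unital K-subalgebra of M_2(K[X;Y]) generated by C1, C2. *)
inductive_set genF :: "'k::comm_ring_1 scmat set" where
  scalar: "mat_scalar k \<in> genF"
| gen1: "C1 \<in> genF"
| gen2: "C2 \<in> genF"
| add: "A \<in> genF \<Longrightarrow> B \<in> genF \<Longrightarrow> mat_add A B \<in> genF"
| mult: "A \<in> genF \<Longrightarrow> B \<in> genF \<Longrightarrow> mat_mult A B \<in> genF"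

definition h1 :: "'k::comm_ring_1 sc" where
  "h1 = y1 *\<^sub>s y2 *\<^sub>s y1' *\<^sub>s y2'"

definition h2 :: "'k::comm_ring_1 sc" where
  "h2 = y1 *\<^sub>s y2 *\<^sub>s (y1' *\<^sub>s (x2' -\<^sub>s x2) -\<^sub>s y2' *\<^sub>s (x1' -\<^sub>s x1))"

definition h3 :: "'k::comm_ring_1 sc" where
  "h3 = y1' *\<^sub>s y2' *\<^sub>s (y1 *\<^sub>s (x2' -\<^sub>s x2) -\<^sub>s y2 *\<^sub>s (x1' -\<^sub>s x1))"

definition h4 :: "'k::comm_ring_1 sc" where
  "h4 = (y1' *\<^sub>s (x2' -\<^sub>s x2) -\<^sub>s y2' *\<^sub>s (x1' -\<^sub>s x1)) *\<^sub>s
        (y1 *\<^sub>s (x2' -\<^sub>s x2) -\<^sub>s y2 *\<^sub>s (x1' -\<^sub>s x1))"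

end

theory Submission
  imports Defs
begin

text \<open>
  Writing an element of K[X;Y] through its coefficients at the sixteen odd monomials y_S, the
  equations A Ci = Ci A become a linear system over K[X] in the coefficients of a, b, c, d.
  For A \<in> F the entries a, d are even and b, c are odd, which halves the unknowns. The system
  leaves only two coefficients of b, two of c and five of d - a, and ties all of them except the
  top coefficient of d - a (which is free and gives f1) to one coefficient \<beta> of b and one
  coefficient \<gamma> of c with \<beta> (x1' - x1) = \<gamma> (x2' - x2). Substituting x2 for x2' shows
  that x2' - x2 divides \<beta>; the quotient is f4. The converse is a direct computation.
\<close>

section \<open>Substituting one variable for another in K[X]\<close>

definition subst_monom :: "nat \<Rightarrow> nat \<Rightarrow> (nat \<Rightarrow>\<^sub>0 nat) \<Rightarrow> (nat \<Rightarrow>\<^sub>0 nat)" where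
  "subst_monom i j m = Poly_Mapping.update i 0 m + Poly_Mapping.single j (Poly_Mapping.lookup m i)"

definition subst_var :: "nat \<Rightarrow> nat \<Rightarrow> 'k::comm_ring_1 mpoly \<Rightarrow> 'k mpoly" where
  "subst_var i j P =
     (\<Sum>m\<in>Poly_Mapping.keys P. Poly_Mapping.single (subst_monom i j m) (Poly_Mapping.lookup P m))"

lemma lookup_subst_monom:
  "Poly_Mapping.lookup (subst_monom i j m) k =
     (if k = i then 0 else Poly_Mapping.lookup m k) + (if k = j then Poly_Mapping.lookup m i else 0)"
  by (simp add: subst_monom_def lookup_add lookup_update lookup_single)

lemma subst_monom_add: "subst_monom i j (m + n) = subst_monom i j m + subst_monom i j n"
  by (rule poly_mapping_eqI) (simp add: lookup_subst_monom lookup_add)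

lemma subst_var_eq_sum_superset:
  assumes "finite S" "Poly_Mapping.keys P \<subseteq> S"
  shows "subst_var i j P = (\<Sum>m\<in>S. Poly_Mapping.single (subst_monom i j m) (Poly_Mapping.lookup P m))"
  unfolding subst_var_def using assms
  by (intro sum.mono_neutral_left) (auto simp: in_keys_iff)

lemma subst_var_add: "subst_var i j (P + Q) = subst_var i j P + subst_var i j Q"
proof -
  let ?S = "Poly_Mapping.keys P \<union> Poly_Mapping.keys Q"
  have "subst_var i j (P + Q) =
      (\<Sum>m\<in>?S. Poly_Mapping.single (subst_monom i j m) (Poly_Mapping.lookup (P + Q) m))"
    by (intro subst_var_eq_sum_superset keys_add) auto
  also have "\<dots> = subst_var i j P + subst_var i j Q"
    by (simp add: lookup_add single_add sum.distrib subst_var_eq_sum_superset[of ?S])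
  finally show ?thesis .
qed

lemma subst_var_0 [simp]: "subst_var i j 0 = 0"
  by (simp add: subst_var_def)

lemma subst_var_sum: "finite A \<Longrightarrow> subst_var i j (sum f A) = (\<Sum>x\<in>A. subst_var i j (f x))"
  by (induct A rule: finite_induct) (simp_all add: subst_var_add)

lemma subst_var_diff: "subst_var i j (P - Q) = subst_var i j P - subst_var i j Q"
  using subst_var_add[of i j "P - Q" Q] by simp

lemma subst_var_single:
  "subst_var i j (Poly_Mapping.single m c) = Poly_Mapping.single (subst_monom i j m) c"
  by (cases "c = 0") (simp_all add: subst_var_def)

lemma poly_mapping_eq_sum_single_keys:
  "P = (\<Sum>m\<in>Poly_Mapping.keys P. Poly_Mapping.single m (Poly_Mapping.lookup P m))"
  by (rule poly_mapping_eqI)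
    (auto simp: lookup_sum lookup_single when_def in_keys_iff intro: sum.neutral split: if_splits)

lemma subst_var_mult: "subst_var i j (P * Q) = subst_var i j P * subst_var i j Q"
proof -
  let ?terms = "\<lambda>f. \<Sum>m\<in>Poly_Mapping.keys P. \<Sum>n\<in>Poly_Mapping.keys Q.
      Poly_Mapping.single (f m + f n) (Poly_Mapping.lookup P m * Poly_Mapping.lookup Q n)"
  have "P * Q = ?terms id"
    by (subst (1 2) poly_mapping_eq_sum_single_keys)
      (simp add: sum_distrib_left sum_distrib_right mult_single, rule sum.swap)
  then have "subst_var i j (P * Q) = ?terms (subst_monom i j)"
    by (simp add: subst_var_sum subst_var_single subst_monom_add)
  also have "\<dots> = subst_var i j P * subst_var i j Q"
    by (simp add: subst_var_def sum_distrib_left sum_distrib_right mult_single) (rule sum.swap)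
  finally show ?thesis .
qed

lemma single_single_eq_Xvar_power:
  "Poly_Mapping.single (Poly_Mapping.single i k) (1::'k::comm_ring_1) = Xvar i ^ k"
proof (induct k)
  case (Suc k)
  have "Xvar i * Poly_Mapping.single (Poly_Mapping.single i k) 1 =
      Poly_Mapping.single (Poly_Mapping.single i (Suc k)) (1::'k)"
    by (simp add: Xvar_def mult_single flip: single_add)
  with Suc show ?case
    by simp
qed simp

lemma Xvar_diff_dvd_sub_subst_var:
  "(Xvar i - Xvar j :: 'k::comm_ring_1 mpoly) dvd P - subst_var i j P"
proof -
  have monom: "(Xvar i - Xvar j :: 'k mpoly) dvd
      Poly_Mapping.single m c - Poly_Mapping.single (subst_monom i j m) c" for m c
  proof -
    define m' where "m' = Poly_Mapping.update i 0 m"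
    define k where "k = Poly_Mapping.lookup m i"
    have "m = m' + Poly_Mapping.single i k"
      by (rule poly_mapping_eqI)
        (simp add: m'_def k_def lookup_add lookup_update lookup_single when_def)
    moreover have "subst_monom i j m = m' + Poly_Mapping.single j k"
      by (simp add: subst_monom_def m'_def k_def)
    ultimately have "Poly_Mapping.single m c - Poly_Mapping.single (subst_monom i j m) c =
        Poly_Mapping.single m' c * (Xvar i ^ k - Xvar j ^ k)"
      by (simp add: single_single_eq_Xvar_power[symmetric] mult_single right_diff_distrib)
    also have "(Xvar i - Xvar j) dvd \<dots>"
      by (simp add: power_diff_sumr2)
    finally show ?thesis .
  qed
  have "P - subst_var i j P = (\<Sum>m\<in>Poly_Mapping.keys P.
      Poly_Mapping.single m (Poly_Mapping.lookup P m) -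
      Poly_Mapping.single (subst_monom i j m) (Poly_Mapping.lookup P m))"
    by (subst (1) poly_mapping_eq_sum_single_keys) (simp add: subst_var_def sum_subtractf)
  also have "(Xvar i - Xvar j) dvd \<dots>"
    by (intro dvd_sum monom)
  finally show ?thesis .
qed

lemma subst_var_Xvar: "subst_var i j (Xvar k) = (if k = i then Xvar j else Xvar k)"
proof -
  have "subst_monom i j (Poly_Mapping.single k 1) =
      Poly_Mapping.single (if k = i then j else k) 1"
    by (rule poly_mapping_eqI) (simp add: lookup_subst_monom lookup_single when_def)
  then show ?thesis
    by (simp add: Xvar_def subst_var_single)
qed

lemma Xvar_eq_iff [simp]: "Xvar i = (Xvar j :: 'k::comm_ring_1 mpoly) \<longleftrightarrow> i = j"
proof
  assume "Xvar i = (Xvar j :: 'k mpoly)"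
  then have "Poly_Mapping.lookup (Xvar j :: 'k mpoly) (Poly_Mapping.single i 1) = 1"
    by (metis Xvar_def lookup_single_eq)
  then have "Poly_Mapping.single j (1::nat) = Poly_Mapping.single i 1"
    by (simp add: Xvar_def lookup_single when_def split: if_splits)
  then have "Poly_Mapping.lookup (Poly_Mapping.single j (1::nat)) i = 1"
    by simp
  then show "i = j"
    by (simp add: lookup_single when_def split: if_splits)
qed simp

lemma Xvar_diff_cross_mult:
  fixes \<beta> \<gamma> :: "'k::idom mpoly"
  assumes eq: "\<beta> * (Xvar k - Xvar l) = \<gamma> * (Xvar i - Xvar j)"
    and "i \<noteq> j" "k \<noteq> l" "k \<noteq> i" "l \<noteq> i"
  obtains f where "\<beta> = (Xvar i - Xvar j) * f" and "\<gamma> = (Xvar k - Xvar l) * f"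
proof -
  have "subst_var i j \<beta> * (Xvar k - Xvar l) = 0"
    using arg_cong[OF eq, of "subst_var i j"] assms(4,5)
    by (simp add: subst_var_mult subst_var_diff subst_var_Xvar)
  then have "subst_var i j \<beta> = 0"
    using assms(3) by simp
  then obtain f where f: "\<beta> = (Xvar i - Xvar j) * f"
    using Xvar_diff_dvd_sub_subst_var[of i j \<beta>] by (auto elim: dvdE)
  have "(Xvar i - Xvar j) * (\<gamma> - (Xvar k - Xvar l) * f) = 0"
    using eq unfolding f by (simp add: algebra_simps)
  then have "\<gamma> = (Xvar k - Xvar l) * f"
    using assms(2) by simp
  with f show thesis
    by (rule that)
qed

definition sc_term :: "nat set \<Rightarrow> 'k::comm_ring_1 mpoly \<Rightarrow> 'k sc" where
  "sc_term T p = (\<lambda>S. if S = T then p else 0)"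

definition yset :: "bool \<Rightarrow> bool \<Rightarrow> bool \<Rightarrow> bool \<Rightarrow> nat set" where
  "yset a0 a1 a2 a3 = {i. i = 0 \<and> a0 \<or> i = 1 \<and> a1 \<or> i = 2 \<and> a2 \<or> i = 3 \<and> a3}"

lemma mem_yset [simp]:
  "i \<in> yset a0 a1 a2 a3 \<longleftrightarrow> i = 0 \<and> a0 \<or> i = 1 \<and> a1 \<or> i = 2 \<and> a2 \<or> i = 3 \<and> a3"
  by (simp add: yset_def)

lemma yset_subset_atLeastLessThan [simp]: "yset a0 a1 a2 a3 \<subseteq> {0..<4}"
  by auto

lemma yset_subset_iff [simp]:
  "yset a0 a1 a2 a3 \<subseteq> yset c0 c1 c2 c3 \<longleftrightarrow> (a0 \<longrightarrow> c0) \<and> (a1 \<longrightarrow> c1) \<and> (a2 \<longrightarrow> c2) \<and> (a3 \<longrightarrow> c3)"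
proof
  assume "yset a0 a1 a2 a3 \<subseteq> yset c0 c1 c2 c3"
  then have "i \<in> yset a0 a1 a2 a3 \<Longrightarrow> i \<in> yset c0 c1 c2 c3" for i
    by blast
  from this[of 0] this[of 1] this[of 2] this[of 3]
  show "(a0 \<longrightarrow> c0) \<and> (a1 \<longrightarrow> c1) \<and> (a2 \<longrightarrow> c2) \<and> (a3 \<longrightarrow> c3)"
    by simp
qed auto

lemma yset_eq_iff [simp]:
  "yset a0 a1 a2 a3 = yset c0 c1 c2 c3 \<longleftrightarrow> a0 = c0 \<and> a1 = c1 \<and> a2 = c2 \<and> a3 = c3"
  by (simp only: set_eq_subset yset_subset_iff) blast

lemma yset_diff [simp]:
  "yset a0 a1 a2 a3 - yset c0 c1 c2 c3 = yset (a0 \<and> \<not> c0) (a1 \<and> \<not> c1) (a2 \<and> \<not> c2) (a3 \<and> \<not> c3)"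
  by auto

lemma yset_of_subset:
  assumes "S \<subseteq> {0..<4}"
  shows "S = yset (0 \<in> S) (1 \<in> S) (2 \<in> S) (3 \<in> S)"
proof (rule set_eqI)
  fix x
  have "x \<in> S \<Longrightarrow> x = 0 \<or> x = 1 \<or> x = 2 \<or> x = 3"
    using assms by (subgoal_tac "x < 4") auto
  then show "x \<in> S \<longleftrightarrow> x \<in> yset (0 \<in> S) (1 \<in> S) (2 \<in> S) (3 \<in> S)"
    by auto
qed

lemma card_yset [simp]:
  "card (yset a0 a1 a2 a3) = of_bool a0 + of_bool a1 + of_bool a2 + of_bool a3"
proof -
  have "yset a0 a1 a2 a3 \<subseteq> {0, 1, 2, 3}"
    by (simp add: subset_iff)
  then have "card (yset a0 a1 a2 a3) = card ({0, 1, 2, 3} \<inter> {i. i \<in> yset a0 a1 a2 a3})"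
    by (simp only: Collect_mem_eq Int_absorb1)
  also have "\<dots> = (\<Sum>i\<in>{0, 1, 2, 3}. of_bool (i \<in> yset a0 a1 a2 a3))"
    by simp
  finally show ?thesis
    by (simp del: sum_of_bool_eq)
qed

lemma inv_count_yset [simp]:
  "inv_count (yset a0 a1 a2 a3) (yset c0 c1 c2 c3) =
     of_bool (a1 \<and> c0) + of_bool (a2 \<and> c0) + of_bool (a2 \<and> c1) +
     of_bool (a3 \<and> c0) + of_bool (a3 \<and> c1) + of_bool (a3 \<and> c2)"
proof -
  let ?I = "{0, 1, 2, 3 :: nat}"
  let ?inv = "\<lambda>(i, j). i \<in> yset a0 a1 a2 a3 \<and> j \<in> yset c0 c1 c2 c3 \<and> j < i"
  have "yset a0 a1 a2 a3 \<subseteq> ?I" "yset c0 c1 c2 c3 \<subseteq> ?I"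
    by (simp_all add: subset_iff)
  then have "{(i, j). ?inv (i, j)} = (?I \<times> ?I) \<inter> {p. ?inv p}"
    by blast
  then have "inv_count (yset a0 a1 a2 a3) (yset c0 c1 c2 c3) = (\<Sum>p\<in>?I \<times> ?I. of_bool (?inv p))"
    by (simp only: inv_count_def sum_of_bool_eq[OF finite_SigmaI] of_nat_id) simp_all
  also have "\<dots> = (\<Sum>i\<in>?I. \<Sum>j\<in>?I. of_bool (?inv (i, j)))"
    by (simp only: sum.cartesian_product split_def prod.case fst_conv snd_conv)
  finally show ?thesis
    by (simp del: sum_of_bool_eq)
qed

lemma sc_term_yset [simp]:
  "sc_term (yset a0 a1 a2 a3) p (yset c0 c1 c2 c3) =
     (if a0 = c0 \<and> a1 = c1 \<and> a2 = c2 \<and> a3 = c3 then p else 0)"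
  by (simp add: sc_term_def)

lemma sc_term_outside: "\<not> S \<subseteq> {0..<4} \<Longrightarrow> sc_term (yset a0 a1 a2 a3) p S = 0"
  by (auto simp: sc_term_def)

lemma sc_mult_outside: "\<not> S \<subseteq> {0..<4} \<Longrightarrow> (u *\<^sub>s v) S = 0"
  by (simp add: sc_mult_def)

lemma sc_eqI:
  assumes "\<forall>a0 a1 a2 a3. u (yset a0 a1 a2 a3) = v (yset a0 a1 a2 a3)"
    and "\<And>S. \<not> S \<subseteq> {0..<4} \<Longrightarrow> u S = v S"
  shows "u = v"
  using assms by (metis yset_of_subset ext)

lemma sc_term_mult_left:
  "(sc_term T p *\<^sub>s w) S =
     (if S \<subseteq> {0..<4} \<and> T \<subseteq> S then (-1) ^ inv_count T (S - T) * p * w (S - T) else 0)"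
proof (cases "S \<subseteq> {0..<4}")
  case True
  then have "finite (Pow S)"
    by (simp add: finite_subset)
  moreover have "(sc_term T p *\<^sub>s w) S = (\<Sum>T'\<in>Pow S.
      if T' = T then (-1) ^ inv_count T' (S - T') * p * w (S - T') else 0)"
    using True unfolding sc_mult_def sc_term_def by (auto intro: sum.cong)
  ultimately show ?thesis
    using True by (simp add: sum.delta')
qed (simp add: sc_mult_def)

lemma sc_term_mult_right:
  "(w *\<^sub>s sc_term T p) S =
     (if S \<subseteq> {0..<4} \<and> T \<subseteq> S then (-1) ^ inv_count (S - T) T * w (S - T) * p else 0)"
proof (cases "S \<subseteq> {0..<4}")
  case True
  then have "finite (Pow S)"
    by (simp add: finite_subset)
  moreover have "(w *\<^sub>s sc_term T p) S = (\<Sum>T'\<in>Pow S.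
      if T' = S - T \<and> T \<subseteq> S then (-1) ^ inv_count T' (S - T') * w T' * p else 0)"
    using True unfolding sc_mult_def sc_term_def by (simp, intro sum.cong) auto
  ultimately show ?thesis
    using True by (cases "T \<subseteq> S") (simp_all add: sum.delta' double_diff)
qed (simp add: sc_mult_def)

lemma sc_add_mult_distrib: "(u +\<^sub>s v) *\<^sub>s w = u *\<^sub>s w +\<^sub>s v *\<^sub>s w"
  by (simp add: sc_mult_def sc_add_def fun_eq_iff sum.distrib algebra_simps)

text \<open>Oriented so as to undo \<open>Diff_cancel\<close> when computing coefficients of products.\<close>

lemma empty_eq_yset: "{} = yset False False False False"
  by (simp add: yset_def)

lemma sc_even_eq_sc_term: "sc_even p = sc_term (yset False False False False) p"
  by (simp add: sc_even_def sc_term_def empty_eq_yset fun_eq_iff)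

lemma sc_x_eq_sc_term: "sc_x i = sc_term (yset False False False False) (Xvar i)"
  by (simp add: sc_x_def sc_even_eq_sc_term)

text \<open>\<open>y2\<close> is stated as \<open>sc_y (Suc 0)\<close>, the simplifier's normal form of \<open>sc_y 1\<close>.\<close>

lemma sc_y_eq_sc_term:
  "y1 = sc_term (yset True False False False) 1"
  "sc_y (Suc 0) = sc_term (yset False True False False) 1"
  "y1' = sc_term (yset False False True False) 1"
  "y2' = sc_term (yset False False False True) 1"
  by (auto simp: sc_y_def sc_term_def fun_eq_iff)

lemmas sc_coord_simps = sc_term_mult_left sc_term_mult_right sc_add_def sc_sub_def sc_neg_def
  sc_y_eq_sc_term sc_x_eq_sc_term sc_even_eq_sc_term sc_mult_outside sc_term_outside empty_eq_yset

abbreviation "dx1 \<equiv> Xvar 2 - Xvar 0"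
abbreviation "dx2 \<equiv> Xvar 3 - Xvar 1"

lemma y1_y2_eq: "y1 *\<^sub>s y2 = sc_term (yset True True False False) (1::'k::comm_ring_1 mpoly)"
  by (rule sc_eqI) (simp_all add: sc_coord_simps all_bool_eq)

lemma y1'_y2'_eq: "y1' *\<^sub>s y2' = sc_term (yset False False True True) (1::'k::comm_ring_1 mpoly)"
  by (rule sc_eqI) (simp_all add: sc_coord_simps all_bool_eq)

lemma h_factor_eq:
  "y1 *\<^sub>s (x2' -\<^sub>s x2) -\<^sub>s y2 *\<^sub>s (x1' -\<^sub>s x1) =
     sc_term (yset True False False False) dx2 +\<^sub>s sc_term (yset False True False False) (- dx1 :: 'k::comm_ring_1 mpoly)"
  by (rule sc_eqI) (simp_all add: sc_coord_simps all_bool_eq)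

lemma h_factor'_eq:
  "y1' *\<^sub>s (x2' -\<^sub>s x2) -\<^sub>s y2' *\<^sub>s (x1' -\<^sub>s x1) =
     sc_term (yset False False True False) dx2 +\<^sub>s sc_term (yset False False False True) (- dx1 :: 'k::comm_ring_1 mpoly)"
  by (rule sc_eqI) (simp_all add: sc_coord_simps all_bool_eq)

lemma h1_eq: "(h1 :: 'k::comm_ring_1 sc) = sc_term (yset True True True True) 1"
  unfolding h1_def by (rule sc_eqI) (simp_all add: sc_coord_simps all_bool_eq)

lemma h2_eq:
  "(h2 :: 'k::comm_ring_1 sc) =
     sc_term (yset True True True False) dx2 +\<^sub>s sc_term (yset True True False True) (- dx1)"
  unfolding h2_def y1_y2_eq h_factor'_eq by (rule sc_eqI) (simp_all add: sc_coord_simps all_bool_eq)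

lemma h3_eq:
  "(h3 :: 'k::comm_ring_1 sc) =
     sc_term (yset True False True True) dx2 +\<^sub>s sc_term (yset False True True True) (- dx1)"
  unfolding h3_def y1'_y2'_eq h_factor_eq by (rule sc_eqI) (simp_all add: sc_coord_simps all_bool_eq)

lemma h4_eq:
  "(h4 :: 'k::comm_ring_1 sc) =
     sc_term (yset True False True False) (- (dx2 * dx2)) +\<^sub>s sc_term (yset False True True False) (dx1 * dx2) +\<^sub>s
     sc_term (yset True False False True) (dx1 * dx2) +\<^sub>s sc_term (yset False True False True) (- (dx1 * dx1))"
  unfolding h4_def h_factor_eq h_factor'_eq sc_add_mult_distrib
  by (rule sc_eqI) (simp_all add: sc_coord_simps all_bool_eq algebra_simps)

section \<open>Parity\<close>

definition sc_homogeneous :: "'k::comm_ring_1 sc \<Rightarrow> nat \<Rightarrow> bool" where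
  "sc_homogeneous u k \<longleftrightarrow> (\<forall>S. u S \<noteq> 0 \<longrightarrow> S \<subseteq> {0..<4} \<and> card S mod 2 = k)"

lemma sc_homogeneous_coeff_eq_0: "sc_homogeneous u k \<Longrightarrow> card S mod 2 \<noteq> k \<Longrightarrow> u S = 0"
  by (auto simp: sc_homogeneous_def)

lemma sc_homogeneous_outside: "sc_homogeneous u k \<Longrightarrow> \<not> S \<subseteq> {0..<4} \<Longrightarrow> u S = 0"
  by (auto simp: sc_homogeneous_def)

lemma sc_homogeneous_sc_term: "T \<subseteq> {0..<4} \<Longrightarrow> card T mod 2 = k \<Longrightarrow> sc_homogeneous (sc_term T p) k"
  by (simp add: sc_homogeneous_def sc_term_def)

lemma sc_homogeneous_zero: "sc_homogeneous sc_zero k"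
  by (simp add: sc_homogeneous_def sc_zero_def)

lemma sc_homogeneous_add:
  "sc_homogeneous u k \<Longrightarrow> sc_homogeneous v k \<Longrightarrow> sc_homogeneous (u +\<^sub>s v) k"
  by (simp add: sc_homogeneous_def sc_add_def) (metis add.right_neutral)

lemma sc_homogeneous_mult:
  assumes u: "sc_homogeneous u k" and v: "sc_homogeneous v l" and m: "m = (k + l) mod 2"
  shows "sc_homogeneous (u *\<^sub>s v) m"
  unfolding sc_homogeneous_def
proof (intro allI impI)
  fix S
  assume uv: "(u *\<^sub>s v) S \<noteq> 0"
  then have S: "S \<subseteq> {0..<4}"
    using sc_mult_outside by blast
  with uv have "(\<Sum>T\<in>Pow S. (-1) ^ inv_count T (S - T) * u T * v (S - T)) \<noteq> 0"
    by (simp add: sc_mult_def)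
  then obtain T where "T \<in> Pow S" and "(-1) ^ inv_count T (S - T) * u T * v (S - T) \<noteq> 0"
    by (rule sum.not_neutral_contains_not_neutral)
  then have "T \<subseteq> S" and "u T \<noteq> 0" and "v (S - T) \<noteq> 0"
    by auto
  then have "card T mod 2 = k" "card (S - T) mod 2 = l"
    using u v by (auto simp: sc_homogeneous_def)
  moreover have "card S = card T + card (S - T)"
    using \<open>T \<subseteq> S\<close> S finite_subset[OF S] by (simp add: card_Diff_subset card_mono finite_subset)
  ultimately show "S \<subseteq> {0..<4} \<and> card S mod 2 = m"
    using S m by (metis mod_add_eq)
qed

lemma genF_homogeneous:
  "A \<in> genF \<Longrightarrow> (case A of (a, b, c, d) \<Rightarrow>
     sc_homogeneous a 0 \<and> sc_homogeneous b 1 \<and> sc_homogeneous c 1 \<and> sc_homogeneous d 0)"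
proof (induction rule: genF.induct)
  case (mult A B)
  then show ?case
    by (cases A rule: prod_cases4; cases B rule: prod_cases4)
      (auto intro!: sc_homogeneous_add sc_homogeneous_mult)
qed (auto simp: mat_scalar_def C1_def C2_def sc_x_eq_sc_term sc_y_eq_sc_term sc_even_eq_sc_term
  intro: sc_homogeneous_zero sc_homogeneous_add sc_homogeneous_sc_term)

section \<open>The centralizer of C1 and C2 in F\<close>

locale generator_commutant =
  fixes a b c d :: "'k::idom sc"
  assumes hom_a: "sc_homogeneous a 0" and hom_b: "sc_homogeneous b 1"
    and hom_c: "sc_homogeneous c 1" and hom_d: "sc_homogeneous d 0"
    and commutes: "mat_mult (a, b, c, d) C1 = mat_mult C1 (a, b, c, d) \<and>
      mat_mult (a, b, c, d) C2 = mat_mult C2 (a, b, c, d)"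
begin

lemmas hom_coeff_simps =
  sc_homogeneous_coeff_eq_0[OF hom_a] sc_homogeneous_coeff_eq_0[OF hom_b]
  sc_homogeneous_coeff_eq_0[OF hom_c] sc_homogeneous_coeff_eq_0[OF hom_d]
  sc_homogeneous_outside[OF hom_a] sc_homogeneous_outside[OF hom_b]
  sc_homogeneous_outside[OF hom_c] sc_homogeneous_outside[OF hom_d]

lemma C1_entries:
  "a *\<^sub>s x1 +\<^sub>s b *\<^sub>s y1' = x1 *\<^sub>s a +\<^sub>s y1 *\<^sub>s c"
  "a *\<^sub>s y1 +\<^sub>s b *\<^sub>s x1' = x1 *\<^sub>s b +\<^sub>s y1 *\<^sub>s d"
  "c *\<^sub>s x1 +\<^sub>s d *\<^sub>s y1' = y1' *\<^sub>s a +\<^sub>s x1' *\<^sub>s c"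
  "c *\<^sub>s y1 +\<^sub>s d *\<^sub>s x1' = y1' *\<^sub>s b +\<^sub>s x1' *\<^sub>s d"
  using commutes by (simp_all add: C1_def)

lemma C2_entries:
  "a *\<^sub>s x2 +\<^sub>s b *\<^sub>s y2' = x2 *\<^sub>s a +\<^sub>s y2 *\<^sub>s c"
  "a *\<^sub>s y2 +\<^sub>s b *\<^sub>s x2' = x2 *\<^sub>s b +\<^sub>s y2 *\<^sub>s d"
  "c *\<^sub>s x2 +\<^sub>s d *\<^sub>s y2' = y2' *\<^sub>s a +\<^sub>s x2' *\<^sub>s c"
  "c *\<^sub>s y2 +\<^sub>s d *\<^sub>s x2' = y2' *\<^sub>s b +\<^sub>s x2' *\<^sub>s d"
  using commutes by (simp_all add: C2_def)

text \<open>
  Each fact below is the y_S-coefficient of one entry of A Ci = Ci A, for a suitable S;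
  \<open>hom_coeff_simps\<close> discard the coefficients of the wrong parity.
\<close>

lemma offdiag_coeffs_eq_0:
  "b (yset False True False False) = 0" "b (yset False False False True) = 0"
  "b (yset True False False False) = 0" "b (yset False False True False) = 0"
  "b (yset False True True True) = 0" "b (yset True False True True) = 0"
  "c (yset False True False False) = 0" "c (yset False False False True) = 0"
  "c (yset True False False False) = 0" "c (yset False False True False) = 0"
  "c (yset True True False True) = 0" "c (yset True True True False) = 0"
  using C1_entries(1)[THEN fun_cong, of "yset False True True False"]
    C1_entries(1)[THEN fun_cong, of "yset False False True True"]
    C2_entries(1)[THEN fun_cong, of "yset True False False True"]
    C2_entries(1)[THEN fun_cong, of "yset False False True True"]
    C1_entries(2)[THEN fun_cong, of "yset False True True True"]
    C2_entries(2)[THEN fun_cong, of "yset True False True True"]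
    C1_entries(1)[THEN fun_cong, of "yset True True False False"]
    C1_entries(1)[THEN fun_cong, of "yset True False False True"]
    C2_entries(1)[THEN fun_cong, of "yset True True False False"]
    C2_entries(1)[THEN fun_cong, of "yset False True True False"]
    C1_entries(3)[THEN fun_cong, of "yset True True False True"]
    C2_entries(3)[THEN fun_cong, of "yset True True True False"]
  by (simp_all add: sc_coord_simps hom_coeff_simps)

lemma diag_coeffs_eq:
  "d (yset False False False False) = a (yset False False False False)"
  "d (yset True True False False) = a (yset True True False False)"
  "d (yset False False True True) = a (yset False False True True)"
proof -
  note simps = sc_coord_simps hom_coeff_simps offdiag_coeffs_eq_0
  show "d (yset False False False False) = a (yset False False False False)"
    using C1_entries(2)[THEN fun_cong, of "yset True False False False"] by (simp add: simps)
  show "d (yset True True False False) = a (yset True True False False)"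
    using C1_entries(3)[THEN fun_cong, of "yset True True True False"] by (simp add: simps)
  show "d (yset False False True True) = a (yset False False True True)"
    using C1_entries(2)[THEN fun_cong, of "yset True False True True"] by (simp add: simps)
qed

lemma mixed_coeffs_eq:
  "d (yset False True True False) - a (yset False True True False) = b (yset True True True False) * dx1"
  "d (yset False True True False) - a (yset False True True False) = c (yset False True True True) * dx2"
  "d (yset False True False True) - a (yset False True False True) = b (yset True True False True) * dx1"
  "d (yset False True False True) - a (yset False True False True) = - c (yset False True True True) * dx1"
  "d (yset True False True False) - a (yset True False True False) = - b (yset True True True False) * dx2"
  "d (yset True False True False) - a (yset True False True False) = c (yset True False True True) * dx2"
  "d (yset True False False True) - a (yset True False False True) = - b (yset True True False True) * dx2"
  "d (yset True False False True) - a (yset True False False True) = - c (yset True False True True) * dx1"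
  using C1_entries(2)[THEN fun_cong, of "yset True True True False"]
    C2_entries(3)[THEN fun_cong, of "yset False True True True"]
    C1_entries(2)[THEN fun_cong, of "yset True True False True"]
    C1_entries(3)[THEN fun_cong, of "yset False True True True"]
    C2_entries(2)[THEN fun_cong, of "yset True True True False"]
    C2_entries(3)[THEN fun_cong, of "yset True False True True"]
    C2_entries(2)[THEN fun_cong, of "yset True True False True"]
    C1_entries(3)[THEN fun_cong, of "yset True False True True"]
  by (simp_all add: sc_coord_simps hom_coeff_simps algebra_simps)

lemma commutant_form:
  "\<exists>f1 f4. b = sc_even f4 *\<^sub>s h2 \<and> c = -\<^sub>s (sc_even f4 *\<^sub>s h3) \<and>
     d = a +\<^sub>s sc_even f1 *\<^sub>s h1 +\<^sub>s sc_even f4 *\<^sub>s h4"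
proof -
  let ?\<beta>2 = "b (yset True True True False)" and ?\<beta>3 = "b (yset True True False True)"
  let ?\<gamma>0 = "c (yset True False True True)" and ?\<gamma>1 = "c (yset False True True True)"
  have "?\<beta>2 * dx1 = ?\<gamma>1 * dx2"
    using mixed_coeffs_eq(1,2) by simp
  then obtain f where \<beta>2: "?\<beta>2 = dx2 * f" and \<gamma>1: "?\<gamma>1 = dx1 * f"
    by (rule Xvar_diff_cross_mult) simp_all
  have "?\<beta>3 * dx1 = - (dx1 * f) * dx1"
    using mixed_coeffs_eq(3,4) \<gamma>1 by simp
  then have \<beta>3: "?\<beta>3 = - (dx1 * f)"
    by (subst (asm) mult_cancel_right) simp
  have "?\<gamma>0 * dx2 = - (dx2 * f) * dx2"
    using mixed_coeffs_eq(5,6) \<beta>2 by simp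
  then have \<gamma>0: "?\<gamma>0 = - (dx2 * f)"
    by (subst (asm) mult_cancel_right) simp
  note simps = all_bool_eq sc_coord_simps hom_coeff_simps offdiag_coeffs_eq_0 \<beta>2 \<beta>3 \<gamma>0 \<gamma>1
  show ?thesis
  proof (intro exI conjI)
    show "b = sc_even f *\<^sub>s h2"
      unfolding h2_eq by (rule sc_eqI) (simp_all add: simps algebra_simps)
    show "c = -\<^sub>s (sc_even f *\<^sub>s h3)"
      unfolding h3_eq by (rule sc_eqI) (simp_all add: simps algebra_simps)
    show "d = a +\<^sub>s sc_even (d (yset True True True True) - a (yset True True True True)) *\<^sub>s h1 +\<^sub>s
        sc_even f *\<^sub>s h4"
      unfolding h1_eq h4_eq
      by (rule sc_eqI) (simp_all add: simps diag_coeffs_eq mixed_coeffs_eq[unfolded diff_eq_eq] algebra_simps)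
  qed
qed

end

lemma commutes_with_generators:
  fixes a :: "'k::comm_ring_1 sc"
  assumes hom_a: "sc_homogeneous a 0"
    and "\<exists>f1 f4. b = sc_even f4 *\<^sub>s h2 \<and> c = -\<^sub>s (sc_even f4 *\<^sub>s h3) \<and>
      d = a +\<^sub>s sc_even f1 *\<^sub>s h1 +\<^sub>s sc_even f4 *\<^sub>s h4"
  shows "mat_mult (a, b, c, d) C1 = mat_mult C1 (a, b, c, d) \<and>
    mat_mult (a, b, c, d) C2 = mat_mult C2 (a, b, c, d)"
proof -
  obtain f1 f4 where b: "b = sc_even f4 *\<^sub>s h2" and c: "c = -\<^sub>s (sc_even f4 *\<^sub>s h3)"
    and d: "d = a +\<^sub>s sc_even f1 *\<^sub>s h1 +\<^sub>s sc_even f4 *\<^sub>s h4"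
    using assms(2) by blast
  show ?thesis
    unfolding b c d h1_eq h2_eq h3_eq h4_eq C1_def C2_def mat_mult.simps prod.inject
    by (intro conjI; rule sc_eqI; simp add: all_bool_eq sc_coord_simps algebra_simps
      sc_homogeneous_coeff_eq_0[OF hom_a] sc_homogeneous_outside[OF hom_a])
qed

theorem corollary1:
  fixes a b c d :: "'k::field sc"
  assumes "infinite (UNIV :: 'k set)"
    and "(2::'k) \<noteq> 0"
    and "(a, b, c, d) \<in> genF"
  shows "(mat_mult (a, b, c, d) C1 = mat_mult C1 (a, b, c, d) \<and>
          mat_mult (a, b, c, d) C2 = mat_mult C2 (a, b, c, d))
         \<longleftrightarrow>
         (\<exists>f1 f4 :: 'k mpoly.
            b = sc_even f4 *\<^sub>s h2 \<and>
            c = -\<^sub>s (sc_even f4 *\<^sub>s h3) \<and>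
            d = a +\<^sub>s sc_even f1 *\<^sub>s h1 +\<^sub>s sc_even f4 *\<^sub>s h4)"
proof -
  have hom: "sc_homogeneous a 0" "sc_homogeneous b 1" "sc_homogeneous c 1" "sc_homogeneous d 0"
    using genF_homogeneous[OF assms(3)] by simp_all
  show ?thesis
    using generator_commutant.commutant_form[OF generator_commutant.intro[OF hom]]
      commutes_with_generators[OF hom(1)]
    by (rule iffI)
qed

end
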